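(* Let $n\ge 4$, let $\mathcal C$ be a maximal independent set of the cycle $C_n$, let $c:=|\mathcal C|$, $\alpha:=\lfloor n/2\rfloor$, and $a_n:=(-1)^{\lfloor n/2\rfloor}P_{C_n}(-1)$. Let $G$ be the $\mathcal C$-suspension of $C_n$. Then \[ h_{\alpha(G)}(G)= \begin{cases} -a_n,& \text{if } c=\alpha,\\ \operatorname{sgn}(a_n),& \text{if } c=\lceil n/3\rceil<\alpha,\\ a_n,& \text{if } \lceil n/3\rceil<c<\alpha. \end{cases} \]
   Context: For $\varnothing\ne C\subseteq V(G)$, the $C$-suspension of $G$ is obtained by adding a new vertex $z$ adjacent exactly to the vertices of $C$. $C_n$ is the cycle on $n$ vertices. The independence polynomial is $P_G(x)=\sum_i g_ix^i$, $g_i$ the number of independent sets of size $i$. For $G$ on vertex set $[N]$, let $S=K[x_1,\dots,x_N]$ ($K$ a field), $I(G)$ the edge ideal generated by $x_ix_j$ for edges $\{i,j\}$, $\alpha(G)$ the independence number (equal to $\dim S/I(G)$), and write the Hilbert series of $S/I(G)$ uniquely as $h_G(t)/(1-t)^{\alpha(G)}$ with $h_G(t)=\sum_{i}h_i(G)t^i$ a polynomial with nonzero leading coefficient; $h_i(G)=0$ for $i>\deg h_G$. Thus $h_{\alpha(G)}(G)$ is the coefficient of $t^{\alpha(G)}$ in $h_G(t)$. *)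

theory Defs
  imports Complex_Main "HOL-Computational_Algebra.Polynomial" "HOL-Computational_Algebra.Formal_Power_Series"
begin

text \<open>A finite simple graph is given by a vertex set V and a symmetric edge predicate E.\<close>

definition indep_set :: "'a set \<Rightarrow> ('a \<Rightarrow> 'a \<Rightarrow> bool) \<Rightarrow> 'a set \<Rightarrow> bool" where
  "indep_set V E S \<longleftrightarrow> S \<subseteq> V \<and> (\<forall>x\<in>S. \<forall>y\<in>S. \<not> E x y)"

definition maximal_indep_set :: "'a set \<Rightarrow> ('a \<Rightarrow> 'a \<Rightarrow> bool) \<Rightarrow> 'a set \<Rightarrow> bool" where
  "maximal_indep_set V E S \<longleftrightarrow> indep_set V E S \<and>
     (\<forall>T. indep_set V E T \<and> S \<subseteq> T \<longrightarrow> T = S)"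

definition indep_num :: "'a set \<Rightarrow> ('a \<Rightarrow> 'a \<Rightarrow> bool) \<Rightarrow> nat" where
  "indep_num V E = Max {card S | S. indep_set V E S}"

definition indep_poly :: "'a set \<Rightarrow> ('a \<Rightarrow> 'a \<Rightarrow> bool) \<Rightarrow> int poly" where
  "indep_poly V E = (\<Sum>S\<in>{S. indep_set V E S}. monom 1 (card S))"

text \<open>Hilbert function of S/I(G): I(G) is a monomial ideal, so the degree-d component
  of S/I(G) has as K-basis the monomials of degree d not divisible by any x_i x_j
  with ij an edge, i.e. exponent vectors m supported on V with total degree d
  whose support is an independent set.\<close>
definition hilbert_fn :: "'a set \<Rightarrow> ('a \<Rightarrow> 'a \<Rightarrow> bool) \<Rightarrow> nat \<Rightarrow> nat" where
  "hilbert_fn V E d = card {m :: 'a \<Rightarrow> nat. (\<forall>x. x \<notin> V \<longrightarrow> m x = 0) \<and>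
      (\<Sum>x\<in>V. m x) = d \<and> indep_set V E {x\<in>V. m x \<noteq> 0}}"

definition hilbert_series :: "'a set \<Rightarrow> ('a \<Rightarrow> 'a \<Rightarrow> bool) \<Rightarrow> int fps" where
  "hilbert_series V E = Abs_fps (\<lambda>d. int (hilbert_fn V E d))"

definition h_coeff :: "'a set \<Rightarrow> ('a \<Rightarrow> 'a \<Rightarrow> bool) \<Rightarrow> nat \<Rightarrow> int" where
  "h_coeff V E i = fps_nth (hilbert_series V E * (1 - fps_X) ^ indep_num V E) i"

definition cycle_edge :: "nat \<Rightarrow> nat \<Rightarrow> nat \<Rightarrow> bool" where
  "cycle_edge n i j \<longleftrightarrow> i < n \<and> j < n \<and> (j = (i + 1) mod n \<or> i = (j + 1) mod n)"

definition susp_edge :: "('a \<Rightarrow> 'a \<Rightarrow> bool) \<Rightarrow> 'a \<Rightarrow> 'a set \<Rightarrow> 'a \<Rightarrow> 'a \<Rightarrow> bool" where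
  "susp_edge E z C x y \<longleftrightarrow> E x y \<or> (x = z \<and> y \<in> C) \<or> (y = z \<and> x \<in> C)"

end

theory Submission
  imports Defs "HOL-Computational_Algebra.Polynomial_FPS"
begin

text \<open>The Hilbert series of \<open>S/I(G)\<close> is \<open>\<Sum>\<^sub>S (t/(1-t))\<^bsup>|S|\<^esup>\<close> over the independent sets \<open>S\<close>
  of \<open>G\<close>, so the coefficient of \<open>t\<^bsup>\<alpha>(G)\<^esup>\<close> in \<open>h\<^sub>G\<close> is \<open>(-1)\<^bsup>\<alpha>(G)\<^esup> P(G; -1)\<close>. The independent sets
  of the suspension are those of \<open>C\<^sub>n\<close> together with the sets \<open>{z} \<union> T\<close>, \<open>T\<close> independent in
  \<open>C\<^sub>n\<close> and disjoint from \<open>C\<close>; hence \<open>P(G; -1) = P(C\<^sub>n; -1) - B\<close> with \<open>B\<close> the signed count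
  of these \<open>T\<close>, and \<open>\<alpha>(G)\<close> is \<open>\<alpha> + 1\<close> if \<open>c = \<alpha>\<close> (take \<open>z\<close> and the successors of the
  vertices of \<open>C\<close>) and \<open>\<alpha>\<close> otherwise. As \<open>C\<close> is a maximal independent set, the gaps between
  its consecutive vertices have length one or two. If \<open>3c > n\<close> there is a gap of length
  one, and adding or removing that vertex is a sign-reversing involution, so \<open>B = 0\<close>; if
  \<open>3c = n\<close> all gaps have length two, the vertices outside \<open>C\<close> form a perfect matching with
  \<open>c\<close> edges, and \<open>B = (-1)\<^sup>c\<close>. Finally, the recursion for paths gives \<open>P(C\<^sub>n; -1) = 2(-1)\<^bsup>n/3\<^esup>\<close>
  if \<open>3\<close> divides \<open>n\<close> and \<open>P(C\<^sub>n; -1) = \<plusminus>1\<close> otherwise.\<close>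

section \<open>The top \<open>h\<close>-coefficient of an edge ideal\<close>

definition monomials_with_support :: "'a set \<Rightarrow> nat \<Rightarrow> ('a \<Rightarrow> nat) set" where
  "monomials_with_support S d = {m. {x. m x \<noteq> 0} = S \<and> sum m S = d}"

lemma finite_monomials_with_support:
  assumes "finite S"
  shows "finite (monomials_with_support S d)"
proof (rule finite_subset)
  show "monomials_with_support S d \<subseteq>
      {m. \<forall>x. (x \<in> S \<longrightarrow> m x \<in> {0..d}) \<and> (x \<notin> S \<longrightarrow> m x = 0)}"
    using assms by (auto simp: monomials_with_support_def intro: member_le_sum)
  show "finite {m. \<forall>x. (x \<in> S \<longrightarrow> m x \<in> {0..d}) \<and> (x \<notin> S \<longrightarrow> m x = 0)}"
    using assms by (intro finite_set_of_finite_funs) auto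
qed

lemma sum_fun_upd_notin: "a \<notin> T \<Longrightarrow> sum (m(a := k)) T = sum m T"
  by (intro sum.cong) auto

lemma raise_mem_monomials_with_support:
  assumes "finite T" "a \<notin> T" "m \<in> monomials_with_support (insert a T) d \<union> monomials_with_support T d"
  shows "m(a := Suc (m a)) \<in> monomials_with_support (insert a T) (Suc d)"
proof -
  have "insert a {x. m x \<noteq> 0} = insert a T" "m a + sum m T = d"
    using assms by (auto simp: monomials_with_support_def)
  moreover have "sum (m(a := Suc (m a))) (insert a T) = Suc (m a + sum m T)"
    using assms(1,2) sum_fun_upd_notin[OF assms(2), of m] by simp
  ultimately show ?thesis
    by (auto simp: monomials_with_support_def)
qed

lemma lower_mem_monomials_with_support:
  assumes "finite T" "a \<notin> T" "m \<in> monomials_with_support (insert a T) (Suc d)"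
  shows "m(a := m a - 1) \<in> monomials_with_support (insert a T) d \<union> monomials_with_support T d"
proof -
  have supp: "{x. m x \<noteq> 0} = insert a T" and sum: "m a + sum m T = Suc d"
    using assms by (auto simp: monomials_with_support_def)
  then have "m a \<noteq> 0"
    by blast
  let ?lower = "m(a := m a - 1)"
  have sum_lower: "sum ?lower T = sum m T"
    using assms(2) by (rule sum_fun_upd_notin)
  show ?thesis
  proof (cases "m a = 1")
    case True
    then have "{x. ?lower x \<noteq> 0} = T"
      using supp assms(2) by auto
    moreover have "sum ?lower T = d"
      unfolding sum_lower using True sum by simp
    ultimately show ?thesis
      by (simp add: monomials_with_support_def)
  next
    case False
    then have "{x. ?lower x \<noteq> 0} = insert a T" "sum ?lower (insert a T) = d"
      using \<open>m a \<noteq> 0\<close> supp sum assms(1,2) sum_lower by auto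
    then show ?thesis
      by (simp add: monomials_with_support_def)
  qed
qed

text \<open>Raising the exponent of \<open>a\<close> by one is a bijection from the monomials of degree \<open>d\<close>
  supported on \<open>insert a T\<close> or on \<open>T\<close> onto those of degree \<open>d + 1\<close> supported on \<open>insert a T\<close>.\<close>
lemma card_monomials_with_support_insert:
  assumes "finite T" "a \<notin> T"
  shows "card (monomials_with_support (insert a T) (Suc d)) =
         card (monomials_with_support (insert a T) d) + card (monomials_with_support T d)"
proof -
  let ?M = monomials_with_support
  let ?raise = "\<lambda>m. m(a := Suc (m a))"
  have image: "?raise ` (?M (insert a T) d \<union> ?M T d) = ?M (insert a T) (Suc d)"
  proof (intro equalityI subsetI)
    fix m assume "m \<in> ?M (insert a T) (Suc d)"
    then have "m(a := m a - 1) \<in> ?M (insert a T) d \<union> ?M T d" "m a \<noteq> 0"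
      using lower_mem_monomials_with_support[OF assms] by (auto simp: monomials_with_support_def)
    then show "m \<in> ?raise ` (?M (insert a T) d \<union> ?M T d)"
      by (auto intro!: image_eqI[of _ _ "m(a := m a - 1)"])
  qed (use raise_mem_monomials_with_support[OF assms] in blast)
  have "inj ?raise"
  proof (rule injI)
    fix m m' assume eq: "?raise m = ?raise m'"
    show "m = m'"
    proof
      fix x
      show "m x = m' x"
        using fun_cong[OF eq, of x] by (cases "x = a") auto
    qed
  qed
  then have "card (?M (insert a T) (Suc d)) = card (?M (insert a T) d \<union> ?M T d)"
    unfolding image[symmetric] by (simp add: card_image inj_on_subset)
  also have "\<dots> = card (?M (insert a T) d) + card (?M T d)"
    using assms by (intro card_Un_disjoint finite_monomials_with_support)
      (auto simp: monomials_with_support_def)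
  finally show ?thesis .
qed

definition support_series :: "'a set \<Rightarrow> int fps" where
  "support_series S = Abs_fps (\<lambda>d. int (card (monomials_with_support S d)))"

lemma support_series_empty: "support_series {} = 1"
proof -
  have empty_support: "monomials_with_support {} d = (if d = 0 then {\<lambda>_. 0} else {})" for d
    by (auto simp: monomials_with_support_def)
  show ?thesis
    by (intro fps_ext) (simp add: support_series_def empty_support)
qed

lemma support_series_insert:
  assumes "finite T" "a \<notin> T"
  shows "support_series (insert a T) * (1 - fps_X) = fps_X * support_series T"
proof (rule fps_ext)
  fix d
  show "fps_nth (support_series (insert a T) * (1 - fps_X)) d = fps_nth (fps_X * support_series T) d"
  proof (cases d)
    case 0
    have "monomials_with_support (insert a T) 0 = {}"
      using assms by (auto simp: monomials_with_support_def)
    then show ?thesis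
      using 0 by (simp add: support_series_def)
  next
    case (Suc k)
    then show ?thesis
      using card_monomials_with_support_insert[OF assms, of k]
      by (simp add: support_series_def algebra_simps)
  qed
qed

lemma support_series_mult_power:
  "finite S \<Longrightarrow> support_series S * (1 - fps_X) ^ card S = fps_X ^ card S"
proof (induction S rule: finite_induct)
  case empty
  then show ?case by (simp add: support_series_empty)
next
  case (insert a T)
  then have "support_series (insert a T) * (1 - fps_X) ^ card (insert a T)
      = (support_series (insert a T) * (1 - fps_X)) * (1 - fps_X) ^ card T"
    by (simp add: algebra_simps)
  also have "\<dots> = fps_X * (support_series T * (1 - fps_X) ^ card T)"
    by (simp add: support_series_insert insert.hyps mult.assoc)
  finally show ?case
    using insert by simp
qed

lemma finite_indep_sets: "finite V \<Longrightarrow> finite {S. indep_set V E S}"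
  by (rule finite_subset[of _ "Pow V"]) (auto simp: indep_set_def)

lemma hilbert_series_eq_sum_support_series:
  assumes "finite V"
  shows "hilbert_series V E = (\<Sum>S | indep_set V E S. support_series S)"
proof (rule fps_ext)
  fix d
  have "{m. (\<forall>x. x \<notin> V \<longrightarrow> m x = 0) \<and> sum m V = d \<and> indep_set V E {x \<in> V. m x \<noteq> 0}}
      = (\<Union>S\<in>{S. indep_set V E S}. monomials_with_support S d)"
  proof (intro equalityI subsetI)
    fix m assume m: "m \<in> {m. (\<forall>x. x \<notin> V \<longrightarrow> m x = 0) \<and> sum m V = d \<and>
                              indep_set V E {x \<in> V. m x \<noteq> 0}}"
    then have "{x. m x \<noteq> 0} = {x \<in> V. m x \<noteq> 0}" "sum m {x \<in> V. m x \<noteq> 0} = sum m V"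
      using assms by (auto intro: sum.mono_neutral_left)
    with m show "m \<in> (\<Union>S\<in>{S. indep_set V E S}. monomials_with_support S d)"
      by (auto simp: monomials_with_support_def intro!: bexI[of _ "{x \<in> V. m x \<noteq> 0}"])
  next
    fix m assume "m \<in> (\<Union>S\<in>{S. indep_set V E S}. monomials_with_support S d)"
    then obtain S where S: "indep_set V E S" and m: "{x. m x \<noteq> 0} = S" "sum m S = d"
      by (auto simp: monomials_with_support_def)
    then have "S \<subseteq> V"
      by (simp add: indep_set_def)
    then have "sum m V = sum m S" "{x \<in> V. m x \<noteq> 0} = S"
      using assms m(1) by (auto intro: sum.mono_neutral_right)
    then show "m \<in> {m. (\<forall>x. x \<notin> V \<longrightarrow> m x = 0) \<and> sum m V = d \<and>
                       indep_set V E {x \<in> V. m x \<noteq> 0}}"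
      using S m \<open>S \<subseteq> V\<close> by auto
  qed
  moreover have "card (\<Union>S\<in>{S. indep_set V E S}. monomials_with_support S d)
      = (\<Sum>S | indep_set V E S. card (monomials_with_support S d))"
  proof (rule card_UN_disjoint)
    show "finite {S. indep_set V E S}"
      using assms by (rule finite_indep_sets)
    show "\<forall>S\<in>{S. indep_set V E S}. finite (monomials_with_support S d)"
      using assms by (auto simp: indep_set_def intro: finite_monomials_with_support finite_subset)
    show "\<forall>S\<in>{S. indep_set V E S}. \<forall>T\<in>{S. indep_set V E S}. S \<noteq> T \<longrightarrow>
        monomials_with_support S d \<inter> monomials_with_support T d = {}"
      by (auto simp: monomials_with_support_def)
  qed
  ultimately show "fps_nth (hilbert_series V E) d = fps_nth (\<Sum>S | indep_set V E S. support_series S) d"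
    by (simp add: hilbert_series_def hilbert_fn_def support_series_def fps_sum_nth)
qed

lemma fps_nth_one_minus_X_power_self:
  "fps_nth ((1 - fps_X :: 'a :: idom fps) ^ k) k = (-1) ^ k"
proof -
  have poly: "(1 - fps_X :: 'a fps) ^ k = fps_of_poly ([:1, -1:] ^ k)"
    by (simp add: fps_of_poly_simps)
  have "degree ([:1, -1:] ^ k :: 'a poly) = k"
    by (simp add: degree_power_eq)
  then have "fps_nth ((1 - fps_X :: 'a fps) ^ k) k = lead_coeff ([:1, -1:] ^ k :: 'a poly)"
    unfolding poly fps_of_poly_nth by simp
  then show ?thesis
    by (simp add: lead_coeff_power)
qed

lemma card_le_indep_num:
  assumes "finite V" "indep_set V E S"
  shows "card S \<le> indep_num V E"
  unfolding indep_num_def using assms finite_indep_sets[OF assms(1)] by (intro Max_ge) auto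

lemma indep_num_eqI:
  assumes "finite V" "indep_set V E S" "card S = k" "\<And>S. indep_set V E S \<Longrightarrow> card S \<le> k"
  shows "indep_num V E = k"
  unfolding indep_num_def using assms finite_indep_sets[OF assms(1)] by (intro Max_eqI) auto

text \<open>Since \<open>h(t) = \<Sum>\<^sub>S t\<^bsup>|S|\<^esup>(1-t)\<^bsup>\<alpha>-|S|\<^esup>\<close>, each independent set \<open>S\<close> contributes \<open>(-1)\<^bsup>\<alpha>-|S|\<^esup>\<close>
  to the coefficient of \<open>t\<^sup>\<alpha>\<close>.\<close>
theorem h_coeff_indep_num:
  assumes "finite V"
  shows "h_coeff V E (indep_num V E) = (-1) ^ indep_num V E * poly (indep_poly V E) (-1)"
proof -
  let ?\<alpha> = "indep_num V E"
  have "h_coeff V E ?\<alpha> = (\<Sum>S | indep_set V E S. fps_nth (support_series S * (1 - fps_X) ^ ?\<alpha>) ?\<alpha>)"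
    by (simp add: h_coeff_def hilbert_series_eq_sum_support_series[OF assms] sum_distrib_right
        fps_sum_nth)
  also have "\<dots> = (\<Sum>S | indep_set V E S. (-1) ^ ?\<alpha> * (-1) ^ card S)"
  proof (rule sum.cong[OF refl])
    fix S assume "S \<in> {S. indep_set V E S}"
    then have "finite S" "card S \<le> ?\<alpha>"
      using assms by (auto simp: indep_set_def card_le_indep_num intro: finite_subset)
    then obtain k where k: "?\<alpha> = card S + k"
      using le_Suc_ex by blast
    have "support_series S * (1 - fps_X) ^ ?\<alpha> = fps_X ^ card S * (1 - fps_X) ^ k"
      unfolding k power_add using support_series_mult_power[OF \<open>finite S\<close>]
      by (simp flip: mult.assoc)
    moreover have "(-1) ^ k = (-1) ^ ?\<alpha> * ((-1) ^ card S :: int)"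
      unfolding k power_add by (simp flip: power_mult_distrib)
    ultimately show "fps_nth (support_series S * (1 - fps_X) ^ ?\<alpha>) ?\<alpha> = (-1) ^ ?\<alpha> * (-1) ^ card S"
      unfolding k by (simp add: fps_X_power_mult_nth fps_nth_one_minus_X_power_self)
  qed
  finally show ?thesis
    by (simp add: indep_poly_def poly_sum poly_monom sum_distrib_left)
qed

section \<open>Signed counts of set families\<close>

definition signed_count :: "'a set set \<Rightarrow> int" where
  "signed_count F = (\<Sum>T\<in>F. (-1) ^ card T)"

lemma poly_indep_poly_minus_one:
  "poly (indep_poly V E) (-1) = signed_count {S. indep_set V E S}"
  by (simp add: indep_poly_def signed_count_def poly_sum poly_monom)

lemma signed_count_Un_insert_image:
  assumes "finite F" "finite G" "\<And>T. T \<in> F \<Longrightarrow> x \<notin> T"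
    and "\<And>T. T \<in> G \<Longrightarrow> finite T \<and> x \<notin> T"
  shows "signed_count (F \<union> insert x ` G) = signed_count F - signed_count G"
proof -
  have "inj_on (insert x) G"
    using assms(4) by (intro inj_onI) (metis Diff_insert_absorb)
  then have "signed_count (insert x ` G) = - signed_count G"
    using assms(4) by (simp add: signed_count_def sum.reindex sum_negf)
  moreover have "F \<inter> insert x ` G = {}"
    using assms(3) by blast
  ultimately show ?thesis
    using assms(1,2) by (simp add: signed_count_def sum.union_disjoint)
qed

lemma signed_count_eq_0_if_closed_under_toggle:
  assumes "finite F" "\<And>T. T \<in> F \<Longrightarrow> finite T"
    and "\<And>T. T \<in> F \<Longrightarrow> insert x T \<in> F" "\<And>T. T \<in> F \<Longrightarrow> T - {x} \<in> F"
  shows "signed_count F = 0"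
proof -
  let ?F\<^sub>0 = "{T \<in> F. x \<notin> T}"
  have split: "F = ?F\<^sub>0 \<union> insert x ` ?F\<^sub>0"
  proof (intro equalityI subsetI)
    fix T assume "T \<in> F"
    then show "T \<in> ?F\<^sub>0 \<union> insert x ` ?F\<^sub>0"
      using assms(4) by (cases "x \<in> T") (auto intro!: image_eqI[of _ _ "T - {x}"])
  qed (use assms(3) in auto)
  have "signed_count F = signed_count (?F\<^sub>0 \<union> insert x ` ?F\<^sub>0)"
    using split by (rule arg_cong)
  also have "\<dots> = signed_count ?F\<^sub>0 - signed_count ?F\<^sub>0"
    using assms(1,2) by (intro signed_count_Un_insert_image) auto
  finally show ?thesis
    by simp
qed

definition matching_indep_sets :: "'k set \<Rightarrow> ('k \<Rightarrow> 'a) \<Rightarrow> ('k \<Rightarrow> 'a) \<Rightarrow> 'a set set" where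
  "matching_indep_sets K u v = {T. T \<subseteq> u ` K \<union> v ` K \<and> (\<forall>k\<in>K. u k \<notin> T \<or> v k \<notin> T)}"

lemma finite_matching_indep_sets: "finite K \<Longrightarrow> finite (matching_indep_sets K u v)"
  by (rule finite_subset[of _ "Pow (u ` K \<union> v ` K)"]) (auto simp: matching_indep_sets_def)

lemma matching_indep_sets_insert:
  assumes "u a \<notin> u ` K \<union> v ` K" "v a \<notin> u ` K \<union> v ` K" "u a \<noteq> v a"
  shows "matching_indep_sets (insert a K) u v =
    (matching_indep_sets K u v \<union> insert (u a) ` matching_indep_sets K u v)
      \<union> insert (v a) ` matching_indep_sets K u v"
    (is "?F (insert a K) = (?F K \<union> insert (u a) ` ?F K) \<union> insert (v a) ` ?F K")
proof (intro equalityI subsetI)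
  fix T assume T: "T \<in> ?F (insert a K)"
  obtain T\<^sub>0 where "T\<^sub>0 \<in> ?F K" "T = T\<^sub>0 \<or> T = insert (u a) T\<^sub>0 \<or> T = insert (v a) T\<^sub>0"
  proof
    show "T - {u a, v a} \<in> ?F K"
      using T by (auto simp: matching_indep_sets_def)
    show "T = T - {u a, v a} \<or> T = insert (u a) (T - {u a, v a}) \<or> T = insert (v a) (T - {u a, v a})"
      using T by (auto simp: matching_indep_sets_def)
  qed
  then show "T \<in> (?F K \<union> insert (u a) ` ?F K) \<union> insert (v a) ` ?F K"
    by auto
next
  have fresh: "u k \<noteq> u a \<and> u k \<noteq> v a \<and> v k \<noteq> u a \<and> v k \<noteq> v a" if "k \<in> K" for k
    using that assms by (metis UnCI imageI)
  fix T assume "T \<in> (?F K \<union> insert (u a) ` ?F K) \<union> insert (v a) ` ?F K"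
  then show "T \<in> ?F (insert a K)"
    using assms by (auto simp: matching_indep_sets_def dest: fresh)
qed

lemma signed_count_matching_indep_sets:
  assumes "finite K" "inj_on u K" "inj_on v K" "u ` K \<inter> v ` K = {}"
  shows "signed_count (matching_indep_sets K u v) = (-1) ^ card K"
  using assms
proof (induction K rule: finite_induct)
  case empty
  then show ?case
    by (simp add: matching_indep_sets_def signed_count_def)
next
  case (insert a K)
  let ?F = "matching_indep_sets K u v"
  have new: "u a \<notin> u ` K \<union> v ` K" "v a \<notin> u ` K \<union> v ` K" "u a \<noteq> v a"
    using insert.hyps(2) insert.prems by (auto simp: inj_on_insert)
  have members: "finite T \<and> u a \<notin> T \<and> v a \<notin> T" if "T \<in> ?F" for T
    using that new insert.hyps(1) by (auto simp: matching_indep_sets_def intro: finite_subset)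
  have finite_F: "finite ?F"
    using insert.hyps(1) by (rule finite_matching_indep_sets)
  have "signed_count (?F \<union> insert (u a) ` ?F) = 0"
    using signed_count_Un_insert_image[OF finite_F finite_F] members by simp
  moreover have "signed_count (matching_indep_sets (insert a K) u v) =
      signed_count (?F \<union> insert (u a) ` ?F) - signed_count ?F"
    unfolding matching_indep_sets_insert[OF new] using members new(3)
    using finite_F by (intro signed_count_Un_insert_image) auto
  ultimately show ?case
    using insert by (simp add: inj_on_insert)
qed

section \<open>Independent sets of paths and cycles\<close>

definition path_indep :: "nat \<Rightarrow> nat \<Rightarrow> nat set \<Rightarrow> bool" where
  "path_indep a b S \<longleftrightarrow> S \<subseteq> {a..<b} \<and> (\<forall>x\<in>S. Suc x \<notin> S)"

fun path_signed_count :: "nat \<Rightarrow> int" where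
  "path_signed_count 0 = 1"
| "path_signed_count (Suc 0) = 0"
| "path_signed_count (Suc (Suc k)) = path_signed_count (Suc k) - path_signed_count k"

lemma finite_path_indep: "finite {S. path_indep a b S}"
  by (rule finite_subset[of _ "Pow {a..<b}"]) (auto simp: path_indep_def)

lemma path_indep_add_2:
  "{S. path_indep a (a + Suc (Suc k)) S} =
   {S. path_indep a (a + Suc k) S} \<union> insert (a + Suc k) ` {S. path_indep a (a + k) S}"
proof (intro equalityI subsetI)
  fix S assume S: "S \<in> {S. path_indep a (a + Suc (Suc k)) S}"
  show "S \<in> {S. path_indep a (a + Suc k) S} \<union> insert (a + Suc k) ` {S. path_indep a (a + k) S}"
  proof (cases "a + Suc k \<in> S")
    case True
    then have "path_indep a (a + k) (S - {a + Suc k})"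
      using S by (force simp: path_indep_def less_Suc_eq)
    moreover have "S = insert (a + Suc k) (S - {a + Suc k})"
      using True by blast
    ultimately show ?thesis
      by (metis UnI2 image_eqI mem_Collect_eq)
  next
    case False
    then show ?thesis
      using S by (auto simp: path_indep_def less_Suc_eq)
  qed
qed (auto simp: path_indep_def)

lemma signed_count_path_indep:
  "signed_count {S. path_indep a (a + k) S} = path_signed_count k"
proof (induction k rule: path_signed_count.induct)
  case 1
  have "{S. path_indep a a S} = {{}}"
    by (auto simp: path_indep_def)
  then show ?case
    by (simp add: signed_count_def)
next
  case 2
  have "{S. path_indep a (Suc a) S} = {{}, {a}}"
    by (auto simp: path_indep_def)
  then show ?case
    by (simp add: signed_count_def)
next
  case (3 k)
  have "signed_count {S. path_indep a (a + Suc (Suc k)) S} =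
      signed_count {S. path_indep a (a + Suc k) S} - signed_count {S. path_indep a (a + k) S}"
    unfolding path_indep_add_2 by (intro signed_count_Un_insert_image finite_path_indep)
      (auto simp: path_indep_def intro: finite_subset)
  then show ?case
    using 3 by simp
qed

lemma path_signed_count_add_3: "path_signed_count (k + 3) = - path_signed_count k"
  by (simp add: numeral_3_eq_3)

lemma path_signed_count_mult_3_add: "path_signed_count (3 * q + r) = (-1) ^ q * path_signed_count r"
proof (induction q)
  case (Suc q)
  have "3 * Suc q + r = (3 * q + r) + 3"
    by simp
  then show ?case
    using Suc by (simp only: path_signed_count_add_3) simp
qed simp

definition cyc_succ :: "nat \<Rightarrow> nat \<Rightarrow> nat" where
  "cyc_succ n x = (if Suc x = n then 0 else Suc x)"

definition cyc_pred :: "nat \<Rightarrow> nat \<Rightarrow> nat" where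
  "cyc_pred n x = (if x = 0 then n - 1 else x - 1)"

lemma cyc_succ_less: "x < n \<Longrightarrow> cyc_succ n x < n"
  by (simp add: cyc_succ_def)

lemma cyc_pred_less: "x < n \<Longrightarrow> cyc_pred n x < n"
  by (auto simp: cyc_pred_def)

lemma cyc_pred_succ: "x < n \<Longrightarrow> cyc_pred n (cyc_succ n x) = x"
  by (auto simp: cyc_succ_def cyc_pred_def)

lemma cyc_succ_pred: "x < n \<Longrightarrow> cyc_succ n (cyc_pred n x) = x"
  by (auto simp: cyc_succ_def cyc_pred_def)

lemma cyc_succ_neq: "2 \<le> n \<Longrightarrow> cyc_succ n x \<noteq> x"
  by (simp add: cyc_succ_def)

lemma cyc_succ_eq_iff: "x < n \<Longrightarrow> y < n \<Longrightarrow> cyc_succ n x = cyc_succ n y \<longleftrightarrow> x = y"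
  by (metis cyc_pred_succ)

lemma inj_on_cyc_succ: "inj_on (cyc_succ n) {0..<n}"
  by (rule inj_onI) (metis atLeastLessThan_iff cyc_pred_succ)

lemma inj_on_cyc_pred: "inj_on (cyc_pred n) {0..<n}"
  by (rule inj_onI) (metis atLeastLessThan_iff cyc_succ_pred)

definition cycle_indep :: "nat \<Rightarrow> nat set \<Rightarrow> bool" where
  "cycle_indep n S \<longleftrightarrow> S \<subseteq> {0..<n} \<and> (\<forall>x\<in>S. cyc_succ n x \<notin> S)"

lemma cycle_edge_iff:
  "cycle_edge n x y \<longleftrightarrow> x < n \<and> y < n \<and> (y = cyc_succ n x \<or> x = cyc_succ n y)"
  by (auto simp: cycle_edge_def cyc_succ_def mod_Suc)

lemma indep_set_cycle_edge_iff:
  "indep_set {0..<n} (cycle_edge n) S \<longleftrightarrow> cycle_indep n S"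
  unfolding indep_set_def cycle_indep_def cycle_edge_iff by (auto simp: subset_iff)

lemma cycle_indep_Suc_notin:
  assumes "cycle_indep n S" "x \<in> S"
  shows "Suc x \<notin> S"
  using assms by (cases "Suc x = n") (auto simp: cycle_indep_def cyc_succ_def)

lemma finite_cycle_indep: "finite {S. cycle_indep n S}"
  by (rule finite_subset[of _ "Pow {0..<n}"]) (auto simp: cycle_indep_def)

lemma path_indep_if_cycle_indep_0_notin:
  assumes "cycle_indep n S" "0 \<notin> S"
  shows "path_indep 1 n S"
proof -
  have "S \<subseteq> {1..<n}"
  proof
    fix t assume "t \<in> S"
    moreover from this have "t \<noteq> 0"
      using assms(2) by (intro notI) simp
    ultimately show "t \<in> {1..<n}"
      using assms(1) by (auto simp: cycle_indep_def)
  qed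
  then show ?thesis
    using cycle_indep_Suc_notin[OF assms(1)] by (auto simp: path_indep_def)
qed

lemma path_indep_if_cycle_indep_0_mem:
  assumes "3 \<le> n" "cycle_indep n S" "0 \<in> S"
  shows "path_indep 2 (n - 1) (S - {0})"
proof -
  have "cyc_succ n 0 = 1" "cyc_succ n (n - 1) = 0"
    using assms(1) by (auto simp: cyc_succ_def)
  then have "1 \<notin> S" "n - 1 \<notin> S"
    using assms(2,3) unfolding cycle_indep_def by force+
  have "S - {0} \<subseteq> {2..<n - 1}"
  proof
    fix t assume t: "t \<in> S - {0}"
    then have "t < n" "t \<noteq> 0" "t \<noteq> 1" "t \<noteq> n - 1"
      using assms(2) \<open>1 \<notin> S\<close> \<open>n - 1 \<notin> S\<close> by (auto simp: cycle_indep_def)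
    then show "t \<in> {2..<n - 1}"
      by auto
  qed
  then show ?thesis
    using cycle_indep_Suc_notin[OF assms(2)] by (auto simp: path_indep_def)
qed

lemma cycle_indep_eq_path_indep:
  assumes "3 \<le> n"
  shows "{S. cycle_indep n S} = {S. path_indep 1 n S} \<union> insert 0 ` {S. path_indep 2 (n - 1) S}"
proof (intro equalityI subsetI)
  fix S assume S: "S \<in> {S. cycle_indep n S}"
  show "S \<in> {S. path_indep 1 n S} \<union> insert 0 ` {S. path_indep 2 (n - 1) S}"
  proof (cases "0 \<in> S")
    case True
    then have "S = insert 0 (S - {0})"
      by blast
    moreover have "path_indep 2 (n - 1) (S - {0})"
      using path_indep_if_cycle_indep_0_mem assms S True by blast
    ultimately show ?thesis
      by (metis UnI2 image_eqI mem_Collect_eq)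
  next
    case False
    then show ?thesis
      using path_indep_if_cycle_indep_0_notin S by blast
  qed
next
  fix S assume "S \<in> {S. path_indep 1 n S} \<union> insert 0 ` {S. path_indep 2 (n - 1) S}"
  then show "S \<in> {S. cycle_indep n S}"
    using assms unfolding cycle_indep_def path_indep_def cyc_succ_def by (auto simp: subset_iff)
qed

lemma poly_indep_poly_cycle_minus_one_eq_path:
  assumes "3 \<le> n"
  shows "poly (indep_poly {0..<n} (cycle_edge n)) (-1) =
    path_signed_count (n - 1) - path_signed_count (n - 3)"
proof -
  have "poly (indep_poly {0..<n} (cycle_edge n)) (-1) =
      signed_count {S. path_indep 1 n S} - signed_count {S. path_indep 2 (n - 1) S}"
    unfolding poly_indep_poly_minus_one indep_set_cycle_edge_iff cycle_indep_eq_path_indep[OF assms]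
    by (intro signed_count_Un_insert_image finite_path_indep)
      (auto simp: path_indep_def intro: finite_subset)
  moreover have "1 + (n - 1) = n" "2 + (n - 3) = n - 1"
    using assms by auto
  ultimately show ?thesis
    using signed_count_path_indep[of 1 "n - 1"] signed_count_path_indep[of 2 "n - 3"]
    by (simp only:)
qed

lemma poly_indep_poly_cycle_minus_one:
  assumes "3 \<le> n"
  shows "poly (indep_poly {0..<n} (cycle_edge n)) (-1) =
    (if n mod 3 = 0 then 2 * (-1) ^ (n div 3)
     else if n mod 3 = 1 then (-1) ^ (n div 3) else - ((-1) ^ (n div 3)))"
proof -
  note * = poly_indep_poly_cycle_minus_one_eq_path[OF assms]
  obtain q where q: "n div 3 = Suc q"
    using assms by (metis div_le_mono div_self not0_implies_Suc not_one_le_zero zero_neq_numeral)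
  then have n: "n = 3 * q + 3 + n mod 3"
    using div_mod_decomp[of n 3] by simp
  have initial: "path_signed_count 2 = -1" "path_signed_count 3 = -1" "path_signed_count 4 = 0"
    by (simp_all add: numeral_eq_Suc)
  consider "n mod 3 = 0" | "n mod 3 = 1" | "n mod 3 = 2"
    by arith
  then show ?thesis
  proof cases
    case 1
    then have "n - 1 = 3 * q + 2" "n - 3 = 3 * q + 0"
      using n by simp_all
    then show ?thesis
      unfolding * using 1 q initial by (simp only: path_signed_count_mult_3_add) simp
  next
    case 2
    then have "n - 1 = 3 * q + 3" "n - 3 = 3 * q + 1"
      using n by simp_all
    then show ?thesis
      unfolding * using 2 q initial by (simp only: path_signed_count_mult_3_add) simp
  next
    case 3
    then have "n - 1 = 3 * q + 4" "n - 3 = 3 * q + 2"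
      using n by simp_all
    then show ?thesis
      unfolding * using 3 q initial by (simp only: path_signed_count_mult_3_add) simp
  qed
qed

lemma card_cycle_indep_le:
  assumes "cycle_indep n S"
  shows "2 * card S \<le> n"
proof -
  have S: "S \<subseteq> {0..<n}" "S \<inter> cyc_succ n ` S = {}"
    using assms by (auto simp: cycle_indep_def)
  have "finite S"
    using S(1) by (rule finite_subset) simp
  then have "2 * card S = card (S \<union> cyc_succ n ` S)"
    using S(2) card_image[OF inj_on_subset[OF inj_on_cyc_succ S(1)]]
    by (simp add: card_Un_disjoint)
  also have "\<dots> \<le> card {0..<n}"
    using S(1) cyc_succ_less by (intro card_mono) auto
  finally show ?thesis
    by simp
qed

lemma cycle_indep_evens: "cycle_indep n ((\<lambda>i. 2 * i) ` {0..<n div 2})"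
  unfolding cycle_indep_def cyc_succ_def by auto presburger+

lemma card_evens: "card ((\<lambda>i. 2 * i) ` {0..<n div 2}) = n div 2"
  by (subst card_image) (auto simp: inj_on_def)

section \<open>The suspension of a cycle at a maximal independent set\<close>

locale cycle_maximal_indep =
  fixes n :: nat and C :: "nat set"
  assumes three_le_n: "3 \<le> n"
    and maximal: "maximal_indep_set {0..<n} (cycle_edge n) C"
begin

lemma cycle_indep_C: "cycle_indep n C"
  using maximal by (simp add: maximal_indep_set_def indep_set_cycle_edge_iff)

lemma C_less: "y \<in> C \<Longrightarrow> y < n"
  using cycle_indep_C by (auto simp: cycle_indep_def)

lemma finite_C: "finite C"
  by (rule finite_subset[of _ "{0..<n}"]) (auto dest: C_less)

lemma cyc_succ_notin_C: "y \<in> C \<Longrightarrow> cyc_succ n y \<notin> C"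
  using cycle_indep_C by (simp add: cycle_indep_def)

lemma cyc_pred_notin_C: "y \<in> C \<Longrightarrow> cyc_pred n y \<notin> C"
  using cyc_succ_notin_C[of "cyc_pred n y"] cyc_succ_pred[OF C_less] by auto

lemma C_dominating:
  assumes "t < n" "t \<notin> C"
  shows "cyc_pred n t \<in> C \<or> cyc_succ n t \<in> C"
proof (rule ccontr)
  assume neighbours: "\<not> (cyc_pred n t \<in> C \<or> cyc_succ n t \<in> C)"
  have "cyc_succ n y \<noteq> t" if "y \<in> C" for y
    using that neighbours cyc_pred_succ[OF C_less[OF that]] by auto
  then have "cycle_indep n (insert t C)"
    using cycle_indep_C assms neighbours cyc_succ_neq[of n t] three_le_n
    by (auto simp: cycle_indep_def)
  then have "insert t C = C"
    using maximal subset_insertI[of C t]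
    unfolding maximal_indep_set_def indep_set_cycle_edge_iff by blast
  with assms(2) show False
    by blast
qed

definition indep_outside_C :: "nat set set" where
  "indep_outside_C = {T. cycle_indep n T \<and> T \<inter> C = {}}"

lemma finite_indep_outside_C: "finite indep_outside_C"
  by (rule finite_subset[OF _ finite_cycle_indep]) (auto simp: indep_outside_C_def)

lemma indep_outside_C_memD:
  assumes "T \<in> indep_outside_C" "t \<in> T"
  shows "t < n" "t \<notin> C" "cyc_succ n t \<notin> T"
  using assms by (auto simp: indep_outside_C_def cycle_indep_def)

text \<open>Sending each vertex to the first vertex of \<open>C\<close> following it is injective on \<open>T\<close>,
  because \<open>C\<close> is dominating and \<open>T\<close> is independent.\<close>
lemma card_indep_outside_C_le:
  assumes T: "T \<in> indep_outside_C"
  shows "card T \<le> card C"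
proof -
  define next_C where
    "next_C t = (if cyc_succ n t \<in> C then cyc_succ n t else cyc_succ n (cyc_succ n t))" for t
  have "next_C t \<in> C" if "t \<in> T" for t
  proof (cases "cyc_succ n t \<in> C")
    case False
    have "t < n" "t \<notin> C"
      using indep_outside_C_memD[OF T that] by auto
    then have "cyc_succ n (cyc_succ n t) \<in> C"
      using C_dominating[OF cyc_succ_less False] cyc_pred_succ by auto
    then show ?thesis
      using False by (simp add: next_C_def)
  qed (simp add: next_C_def)
  moreover have "inj_on next_C T"
  proof (rule inj_onI)
    fix t t' assume t: "t \<in> T" and t': "t' \<in> T" and eq: "next_C t = next_C t'"
    have "t < n" "t' < n" "cyc_succ n t \<notin> T" "cyc_succ n t' \<notin> T"
      using indep_outside_C_memD[OF T] t t' by auto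
    then show "t = t'"
      using eq t t' by (auto simp: next_C_def cyc_succ_eq_iff cyc_succ_less split: if_splits)
  qed
  ultimately show ?thesis
    using finite_C by (intro card_inj_on_le) auto
qed

lemma image_cyc_succ_C_in_indep_outside_C: "cyc_succ n ` C \<in> indep_outside_C"
proof -
  have "cyc_succ n (cyc_succ n y) \<noteq> cyc_succ n y'" if "y \<in> C" "y' \<in> C" for y y'
    using that cyc_succ_notin_C C_less by (auto simp: cyc_succ_eq_iff cyc_succ_less)
  then show ?thesis
    using C_less cyc_succ_less cyc_succ_notin_C
    by (auto simp: indep_outside_C_def cycle_indep_def)
qed

lemma card_image_cyc_succ_C: "card (cyc_succ n ` C) = card C"
  by (intro card_image inj_on_subset[OF inj_on_cyc_succ]) (auto dest: C_less)

lemma card_image_cyc_pred_C: "card (cyc_pred n ` C) = card C"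
  by (intro card_image inj_on_subset[OF inj_on_cyc_pred]) (auto dest: C_less)

lemma compl_C: "{0..<n} - C = cyc_succ n ` C \<union> cyc_pred n ` C"
proof (intro equalityI subsetI)
  fix t assume t: "t \<in> {0..<n} - C"
  then consider "cyc_pred n t \<in> C" | "cyc_succ n t \<in> C"
    using C_dominating by auto
  then show "t \<in> cyc_succ n ` C \<union> cyc_pred n ` C"
  proof cases
    case 1
    then show ?thesis
      using cyc_succ_pred[of t n] t by (auto intro: rev_image_eqI)
  next
    case 2
    then show ?thesis
      using cyc_pred_succ[of t n] t by (auto intro: rev_image_eqI)
  qed
next
  fix t assume "t \<in> cyc_succ n ` C \<union> cyc_pred n ` C"
  then show "t \<in> {0..<n} - C"
    using cyc_succ_notin_C cyc_pred_notin_C cyc_succ_less cyc_pred_less C_less by auto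
qed

text \<open>The vertices in both images are those outside \<open>C\<close> with both neighbours in \<open>C\<close>,
  that is, the gaps of length one between consecutive vertices of \<open>C\<close>.\<close>
lemma card_cyc_succ_C_inter_cyc_pred_C:
  "card (cyc_succ n ` C \<inter> cyc_pred n ` C) + n = 3 * card C"
proof -
  have "card (cyc_succ n ` C \<union> cyc_pred n ` C) + card (cyc_succ n ` C \<inter> cyc_pred n ` C) =
      2 * card C"
    using card_Un_Int[of "cyc_succ n ` C" "cyc_pred n ` C"] finite_C
    by (simp add: card_image_cyc_succ_C card_image_cyc_pred_C)
  moreover have "C \<subseteq> {0..<n}"
    using C_less by auto
  then have "card (cyc_succ n ` C \<union> cyc_pred n ` C) = n - card C"
    by (simp flip: compl_C add: card_Diff_subset finite_C)
  moreover have "card C \<le> n"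
    using card_mono[OF _ \<open>C \<subseteq> {0..<n}\<close>] by simp
  ultimately show ?thesis
    by linarith
qed

lemma signed_count_indep_outside_C_eq_0:
  assumes "3 * card C \<noteq> n"
  shows "signed_count indep_outside_C = 0"
proof -
  have "cyc_succ n ` C \<inter> cyc_pred n ` C \<noteq> {}"
    using card_cyc_succ_C_inter_cyc_pred_C assms by (metis add_0 card.empty)
  then obtain y y' where y: "y \<in> C" "y' \<in> C" "cyc_succ n y = cyc_pred n y'"
    by blast
  let ?t = "cyc_succ n y"
  have t: "?t < n" "?t \<notin> C" "cyc_pred n ?t \<in> C" "cyc_succ n ?t \<in> C"
    using y(1) by (simp_all add: C_less cyc_succ_less cyc_succ_notin_C cyc_pred_succ)
      (use y cyc_succ_pred[OF C_less[OF y(2)]] in simp)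
  have "cyc_succ n x \<noteq> ?t" if "x \<in> T" "T \<in> indep_outside_C" for x T
    using that t cyc_pred_succ indep_outside_C_memD by metis
  then have toggle: "insert ?t T \<in> indep_outside_C" "T - {?t} \<in> indep_outside_C"
    if "T \<in> indep_outside_C" for T
    using that t cyc_succ_neq[of n ?t] three_le_n
    by (auto simp: indep_outside_C_def cycle_indep_def)
  have "finite T" if "T \<in> indep_outside_C" for T
    using that by (auto simp: indep_outside_C_def cycle_indep_def intro: finite_subset)
  then show ?thesis
    using signed_count_eq_0_if_closed_under_toggle[OF finite_indep_outside_C] toggle by blast
qed

lemma mem_cyc_succ_C_or_cyc_succ2_C:
  assumes "t < n" "t \<notin> C"
  shows "t \<in> cyc_succ n ` C \<union> (\<lambda>y. cyc_succ n (cyc_succ n y)) ` C"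
proof (cases "cyc_pred n t \<in> C")
  case True
  then show ?thesis
    using cyc_succ_pred[OF assms(1)] by (metis UnI1 image_eqI)
next
  case False
  then have "cyc_pred n (cyc_pred n t) \<in> C"
    using C_dominating[OF cyc_pred_less[OF assms(1)] False] cyc_succ_pred assms by auto
  then show ?thesis
    using cyc_succ_pred cyc_pred_less assms(1) by (metis UnI2 image_eqI)
qed

text \<open>All gaps have length two, so the vertices outside \<open>C\<close> are matched by the edges
  \<open>{y + 1, y + 2}\<close>, \<open>y \<in> C\<close>.\<close>
lemma indep_outside_C_eq_matching_indep_sets:
  assumes "3 * card C = n"
  shows "indep_outside_C = matching_indep_sets C (cyc_succ n) (\<lambda>y. cyc_succ n (cyc_succ n y))"
    (is "_ = matching_indep_sets C ?u ?v")
proof -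
  have less: "?u y < n" "?v y < n" if "y \<in> C" for y
    using that C_less cyc_succ_less by auto
  have no_short_gap: "cyc_succ n ` C \<inter> cyc_pred n ` C = {}"
    using card_cyc_succ_C_inter_cyc_pred_C assms finite_C by simp
  have v_notin_C: "?v y \<notin> C" if "y \<in> C" for y
  proof
    assume "?v y \<in> C"
    then have "?u y \<in> cyc_succ n ` C \<inter> cyc_pred n ` C"
      using that cyc_pred_succ less(1)[OF that] by (metis IntI image_eqI)
    with no_short_gap show False
      by blast
  qed
  have succ_v_in_C: "cyc_succ n (?v y) \<in> C" if "y \<in> C" for y
    using C_dominating[OF less(2) v_notin_C] cyc_succ_notin_C cyc_pred_succ less that by auto
  show ?thesis
  proof (intro equalityI subsetI)
    fix T assume T: "T \<in> indep_outside_C"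
    have "T \<subseteq> ?u ` C \<union> ?v ` C"
    proof
      fix t assume "t \<in> T"
      then show "t \<in> ?u ` C \<union> ?v ` C"
        by (intro mem_cyc_succ_C_or_cyc_succ2_C indep_outside_C_memD[OF T])
    qed
    moreover have "\<forall>y\<in>C. ?u y \<notin> T \<or> ?v y \<notin> T"
      using indep_outside_C_memD(3)[OF T] by blast
    ultimately show "T \<in> matching_indep_sets C ?u ?v"
      by (simp add: matching_indep_sets_def)
  next
    fix T assume "T \<in> matching_indep_sets C ?u ?v"
    then have T: "T \<subseteq> ?u ` C \<union> ?v ` C" "\<forall>y\<in>C. ?u y \<notin> T \<or> ?v y \<notin> T"
      by (auto simp: matching_indep_sets_def)
    then have "T \<inter> C = {}"
      using cyc_succ_notin_C v_notin_C by auto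
    moreover have "cyc_succ n t \<notin> T" if "t \<in> T" for t
    proof -
      obtain y where "y \<in> C" "t = ?u y \<or> t = ?v y"
        using T(1) \<open>t \<in> T\<close> by auto
      then show ?thesis
        using that T(2) \<open>T \<inter> C = {}\<close> succ_v_in_C by auto
    qed
    ultimately show "T \<in> indep_outside_C"
      using T less by (auto simp: indep_outside_C_def cycle_indep_def)
  qed
qed

lemma signed_count_indep_outside_C_tight:
  assumes "3 * card C = n"
  shows "signed_count indep_outside_C = (-1) ^ card C"
proof -
  let ?u = "cyc_succ n" and ?v = "\<lambda>y. cyc_succ n (cyc_succ n y)"
  have less: "y < n" "?u y < n" if "y \<in> C" for y
    using that C_less cyc_succ_less by auto
  have "inj_on ?u C" "inj_on ?v C" "?u ` C \<inter> ?v ` C = {}"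
    using less cyc_succ_notin_C by (auto simp: inj_on_def cyc_succ_eq_iff)
  then show ?thesis
    unfolding indep_outside_C_eq_matching_indep_sets[OF assms]
    by (intro signed_count_matching_indep_sets finite_C)
qed

abbreviation suspension :: "nat \<Rightarrow> nat \<Rightarrow> bool" where
  "suspension \<equiv> susp_edge (cycle_edge n) n C"

lemma indep_set_suspension:
  "{S. indep_set {0..n} suspension S} = {S. cycle_indep n S} \<union> insert n ` indep_outside_C"
proof (intro equalityI subsetI)
  fix S assume "S \<in> {S. indep_set {0..n} suspension S}"
  then have S: "S \<subseteq> {0..n}" "\<And>x y. x \<in> S \<Longrightarrow> y \<in> S \<Longrightarrow> \<not> suspension x y"
    by (auto simp: indep_set_def)
  have "cycle_indep n (S - {n})"
    using S by (fastforce simp: cycle_indep_def susp_edge_def cycle_edge_iff cyc_succ_less)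
  moreover have "(S - {n}) \<inter> C = {}" if "n \<in> S"
    using S(2)[OF that] by (auto simp: susp_edge_def)
  ultimately show "S \<in> {S. cycle_indep n S} \<union> insert n ` indep_outside_C"
    by (cases "n \<in> S") (auto simp: indep_outside_C_def intro!: image_eqI[of _ _ "S - {n}"])
next
  fix S assume "S \<in> {S. cycle_indep n S} \<union> insert n ` indep_outside_C"
  then show "S \<in> {S. indep_set {0..n} suspension S}"
    using C_less
    by (auto simp: indep_set_def susp_edge_def cycle_edge_iff cycle_indep_def indep_outside_C_def)
qed

lemma poly_indep_poly_suspension:
  "poly (indep_poly {0..n} suspension) (-1) =
   poly (indep_poly {0..<n} (cycle_edge n)) (-1) - signed_count indep_outside_C"
  unfolding poly_indep_poly_minus_one indep_set_suspension indep_set_cycle_edge_iff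
  by (intro signed_count_Un_insert_image finite_cycle_indep finite_indep_outside_C)
    (auto simp: cycle_indep_def indep_outside_C_def intro: finite_subset)

lemma card_indep_suspension_le:
  assumes "indep_set {0..n} suspension S"
  shows "card S \<le> (if card C = n div 2 then n div 2 + 1 else n div 2)"
proof -
  have card_C: "card C \<le> n div 2"
    using card_cycle_indep_le[OF cycle_indep_C] by simp
  have "S \<in> {S. cycle_indep n S} \<union> insert n ` indep_outside_C"
    using assms indep_set_suspension by blast
  then consider "cycle_indep n S" | T where "T \<in> indep_outside_C" "S = insert n T"
    by blast
  then show ?thesis
  proof cases
    case 1
    then show ?thesis
      using card_cycle_indep_le[of n S] by auto
  next
    case 2
    then have "finite T" "n \<notin> T"
      by (auto simp: indep_outside_C_def cycle_indep_def intro: finite_subset)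
    then show ?thesis
      using 2 card_indep_outside_C_le[OF 2(1)] card_C by auto
  qed
qed

lemma indep_num_suspension:
  "indep_num {0..n} suspension = (if card C = n div 2 then n div 2 + 1 else n div 2)"
proof (cases "card C = n div 2")
  case True
  have "insert n (cyc_succ n ` C) \<in> {S. indep_set {0..n} suspension S}"
    unfolding indep_set_suspension using image_cyc_succ_C_in_indep_outside_C by blast
  moreover have "n \<notin> cyc_succ n ` C"
    using C_less cyc_succ_less by (metis imageE less_irrefl)
  then have "card (insert n (cyc_succ n ` C)) = n div 2 + 1"
    using True card_image_cyc_succ_C finite_C by simp
  ultimately show ?thesis
    using card_indep_suspension_le True by (intro indep_num_eqI) auto
next
  case False
  have "(\<lambda>i. 2 * i) ` {0..<n div 2} \<in> {S. indep_set {0..n} suspension S}"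
    unfolding indep_set_suspension using cycle_indep_evens by blast
  then show ?thesis
    using card_indep_suspension_le False card_evens by (intro indep_num_eqI) auto
qed

lemma h_coeff_suspension:
  "h_coeff {0..n} suspension (indep_num {0..n} suspension) =
   (-1) ^ (if card C = n div 2 then n div 2 + 1 else n div 2) *
   (poly (indep_poly {0..<n} (cycle_edge n)) (-1) - signed_count indep_outside_C)"
  using h_coeff_indep_num[of "{0..n}" suspension]
  by (simp only: finite_atLeastAtMost indep_num_suspension poly_indep_poly_suspension)

end

theorem theorem6p3:
  fixes n :: nat and C :: "nat set"
  assumes "n \<ge> 4"
    and "maximal_indep_set {0..<n} (cycle_edge n) C"
  defines "c \<equiv> card C"
    and "\<alpha> \<equiv> n div 2"
    and "a \<equiv> (-1) ^ (n div 2) * poly (indep_poly {0..<n} (cycle_edge n)) (-1)"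
    and "h \<equiv> h_coeff {0..n} (susp_edge (cycle_edge n) n C)
               (indep_num {0..n} (susp_edge (cycle_edge n) n C))"
  shows "(c = \<alpha> \<longrightarrow> h = - a)
       \<and> (c = nat \<lceil>real n / 3\<rceil> \<and> nat \<lceil>real n / 3\<rceil> < \<alpha> \<longrightarrow> h = sgn a)
       \<and> (nat \<lceil>real n / 3\<rceil> < c \<and> c < \<alpha> \<longrightarrow> h = a)"
proof -
  interpret cycle_maximal_indep n C
    using assms(1,2) by unfold_locales auto
  let ?P = "poly (indep_poly {0..<n} (cycle_edge n)) (-1)"
  have h: "h = (-1) ^ (if c = \<alpha> then \<alpha> + 1 else \<alpha>) * (?P - signed_count indep_outside_C)"
    unfolding h_def c_def \<alpha>_def by (rule h_coeff_suspension)
  have a: "a = (-1) ^ \<alpha> * ?P"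
    by (simp add: a_def \<alpha>_def)
  have ceiling: "nat \<lceil>real n / 3\<rceil> = (n + 2) div 3"
    using ceiling_divide_eq_div[where 'a = real, of "int n" 3] by simp
  note P = poly_indep_poly_cycle_minus_one[OF three_le_n]
  show ?thesis
  proof (intro conjI impI)
    assume "c = \<alpha>"
    then show "h = - a"
      using h a assms(1) signed_count_indep_outside_C_eq_0 by (simp add: c_def \<alpha>_def)
  next
    assume "c = nat \<lceil>real n / 3\<rceil> \<and> nat \<lceil>real n / 3\<rceil> < \<alpha>"
    then have c: "c = (n + 2) div 3" "c \<noteq> \<alpha>"
      using ceiling by auto
    show "h = sgn a"
    proof (cases "3 * c = n")
      case True
      then have "n mod 3 = 0" "n div 3 = c"
        by auto
      then show ?thesis
        using h a P c True signed_count_indep_outside_C_tight by (simp add: c_def sgn_mult)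
    next
      case False
      then have "n mod 3 \<noteq> 0"
        using c(1) by presburger
      then show ?thesis
        using h a P c False signed_count_indep_outside_C_eq_0 by (auto simp: c_def sgn_mult)
    qed
  next
    assume "nat \<lceil>real n / 3\<rceil> < c \<and> c < \<alpha>"
    then have "3 * c \<noteq> n" "c \<noteq> \<alpha>"
      using ceiling by auto
    then show "h = a"
      using h a signed_count_indep_outside_C_eq_0 by (simp add: c_def)
  qed
qed

end
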